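(* Let $(G,\lambda^{\bullet},\mu^{(0)})$ and $(H,\eta^{\bullet},\nu^{(0)})$ be Haar groupoids and let $p:G\to H$ be a homomorphism of Haar groupoids. Denote also by $p$ its restriction $G^{(0)}\to H^{(0)}$. Then $p_*(\mu^{(0)})\sim\nu^{(0)}$, i.e. for every Borel $E\subseteq H^{(0)}$, $\mu^{(0)}(p^{-1}(E))=0$ if and only if $\nu^{(0)}(E)=0$.
   Context: For a groupoid $G$, $G^{(0)}$ is its unit space, $r,d$ its range and source maps, $G^u=r^{-1}(u)$. A system of measures on a Borel map $\pi:X\to Y$ is a family $\{\lambda^y\}_{y\in Y}$ of positive Borel measures on $X$ with $\lambda^y$ concentrated on $\pi^{-1}(y)$. A continuous left Haar system on $G$ is a system of measures $\lambda^\bullet$ on $r:G\to G^{(0)}$ that is continuous ($u\mapsto\int f\,d\lambda^u$ continuous for every continuous compactly supported $f\ge0$), left invariant ($\lambda^{d(x)}(E)=\lambda^{r(x)}(x\cdot(E\cap G^{d(x)}))$ for all $x\in G$, Borel $E$), and positive on open sets ($\lambda^u(A)>0$ for open $A$ meeting $G^u$). Given a Radon measure $\mu^{(0)}$ on $G^{(0)}$, the induced measure is $\mu(E)=\int_{G^{(0)}}\lambda^u(E)\,d\mu^{(0)}(u)$; $\mu^{(0)}$ is quasi-invariant if $\mu\sim\mu^{-1}$ (mutually absolutely continuous), where $\mu^{-1}(E)=\mu(E^{-1})$. A Haar groupoid $(G,\lambda^\bullet,\mu^{(0)})$ is a second countable, locally compact, Hausdorff topological groupoid with a continuous left Haar system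 $\lambda^\bullet$ and a non-zero quasi-invariant Radon measure $\mu^{(0)}$ on $G^{(0)}$. A homomorphism of Haar groupoids $p:(G,\lambda^\bullet,\mu^{(0)})\to(H,\eta^\bullet,\nu^{(0)})$ is a continuous groupoid homomorphism with $p_*(\mu)\sim\nu$, where $\mu,\nu$ are the induced measures and $p_*\mu(E)=\mu(p^{-1}(E))$. *)

theory Defs
  imports "HOL-Analysis.Analysis"
begin

text \<open>A groupoid whose set of arrows is the whole type 'a, given by range r,
 source d, partial multiplication m (meaningful on composable pairs d x = r y)
 and inversion i.\<close>
definition groupoid :: "('a \<Rightarrow> 'a) \<Rightarrow> ('a \<Rightarrow> 'a) \<Rightarrow> ('a \<Rightarrow> 'a \<Rightarrow> 'a) \<Rightarrow> ('a \<Rightarrow> 'a) \<Rightarrow> bool" where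
  "groupoid r d m i \<longleftrightarrow>
     (\<forall>x. r (r x) = r x \<and> d (r x) = r x \<and> r (d x) = d x \<and> d (d x) = d x) \<and>
     (\<forall>x y. d x = r y \<longrightarrow> r (m x y) = r x \<and> d (m x y) = d y) \<and>
     (\<forall>x y z. d x = r y \<and> d y = r z \<longrightarrow> m (m x y) z = m x (m y z)) \<and>
     (\<forall>x. m (r x) x = x \<and> m x (d x) = x) \<and>
     (\<forall>x. r (i x) = d x \<and> d (i x) = r x \<and> m x (i x) = r x \<and> m (i x) x = d x)"

definition gunits :: "('a \<Rightarrow> 'a) \<Rightarrow> 'a set" where
  "gunits r = range r"

definition lc_topological_groupoid ::
  "('a::{t2_space,second_countable_topology} \<Rightarrow> 'a) \<Rightarrow> ('a \<Rightarrow> 'a) \<Rightarrow> ('a \<Rightarrow> 'a \<Rightarrow> 'a) \<Rightarrow> ('a \<Rightarrow> 'a) \<Rightarrow> bool" where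
  "lc_topological_groupoid r d m i \<longleftrightarrow>
     groupoid r d m i \<and>
     locally_compact_space (euclidean :: 'a topology) \<and>
     continuous_on UNIV r \<and> continuous_on UNIV d \<and> continuous_on UNIV i \<and>
     continuous_on {(x, y). d x = r y} (\<lambda>(x, y). m x y)"

definition Cc_nonneg :: "('a::topological_space \<Rightarrow> real) set" where
  "Cc_nonneg = {f. continuous_on UNIV f \<and> compact (closure {x. f x \<noteq> 0}) \<and> (\<forall>x. 0 \<le> f x)}"

definition continuous_left_haar_system ::
  "('a::{t2_space,second_countable_topology} \<Rightarrow> 'a) \<Rightarrow> ('a \<Rightarrow> 'a) \<Rightarrow> ('a \<Rightarrow> 'a \<Rightarrow> 'a) \<Rightarrow> ('a \<Rightarrow> 'a measure) \<Rightarrow> bool" where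
  "continuous_left_haar_system r d m lam \<longleftrightarrow>
     \<comment> \<open>system of positive Borel measures on r, lam u concentrated on r^-1(u)\<close>
     (\<forall>u\<in>gunits r. sets (lam u) = sets borel \<and> emeasure (lam u) (UNIV - r -` {u}) = 0) \<and>
     \<comment> \<open>continuity\<close>
     (\<forall>f\<in>Cc_nonneg.
        (\<forall>u\<in>gunits r. (\<integral>\<^sup>+ x. ennreal (f x) \<partial>lam u) < \<infinity>) \<and>
        continuous_on (gunits r) (\<lambda>u. enn2real (\<integral>\<^sup>+ x. ennreal (f x) \<partial>lam u))) \<and>
     \<comment> \<open>left invariance\<close>
     (\<forall>x. \<forall>E\<in>sets borel.
        emeasure (lam (d x)) E = emeasure (lam (r x)) (m x ` (E \<inter> r -` {d x}))) \<and>
     \<comment> \<open>positivity on open sets\<close>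
     (\<forall>u\<in>gunits r. \<forall>A. open A \<and> A \<inter> r -` {u} \<noteq> {} \<longrightarrow> emeasure (lam u) A > 0)"

text \<open>Radon measure on the (closed) unit space, viewed as a Borel measure on G
 concentrated on G^(0): finite on compact sets, outer regular on Borel sets,
 inner regular on open sets.\<close>
definition radon_on :: "'a::topological_space set \<Rightarrow> 'a measure \<Rightarrow> bool" where
  "radon_on S M \<longleftrightarrow>
     sets M = sets borel \<and> emeasure M (UNIV - S) = 0 \<and>
     (\<forall>K. compact K \<longrightarrow> emeasure M K < \<infinity>) \<and>
     (\<forall>B\<in>sets borel. emeasure M B = (INF U\<in>{U. open U \<and> B \<subseteq> U}. emeasure M U)) \<and>
     (\<forall>U. open U \<longrightarrow> emeasure M U = (SUP K\<in>{K. compact K \<and> K \<subseteq> U}. emeasure M K))"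

definition induced_measure :: "('a \<Rightarrow> 'a measure) \<Rightarrow> 'a measure \<Rightarrow> 'a set \<Rightarrow> ennreal" where
  "induced_measure lam mu0 E = (\<integral>\<^sup>+ u. emeasure (lam u) E \<partial>mu0)"

text \<open>Quasi-invariance: mu and mu^-1 are mutually absolutely continuous
 (same null Borel sets), mu^-1(E) = mu(E^-1).\<close>
definition quasi_invariant :: "('a::topological_space \<Rightarrow> 'a) \<Rightarrow> ('a \<Rightarrow> 'a measure) \<Rightarrow> 'a measure \<Rightarrow> bool" where
  "quasi_invariant i lam mu0 \<longleftrightarrow>
     (\<forall>E\<in>sets borel. induced_measure lam mu0 E = 0 \<longleftrightarrow> induced_measure lam mu0 (i ` E) = 0)"

definition haar_groupoid ::
  "('a::{t2_space,second_countable_topology} \<Rightarrow> 'a) \<Rightarrow> ('a \<Rightarrow> 'a) \<Rightarrow> ('a \<Rightarrow> 'a \<Rightarrow> 'a) \<Rightarrow> ('a \<Rightarrow> 'a)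
    \<Rightarrow> ('a \<Rightarrow> 'a measure) \<Rightarrow> 'a measure \<Rightarrow> bool" where
  "haar_groupoid r d m i lam mu0 \<longleftrightarrow>
     lc_topological_groupoid r d m i \<and>
     continuous_left_haar_system r d m lam \<and>
     radon_on (gunits r) mu0 \<and> emeasure mu0 (gunits r) \<noteq> 0 \<and>
     quasi_invariant i lam mu0"

definition groupoid_hom ::
  "('a \<Rightarrow> 'a) \<Rightarrow> ('a \<Rightarrow> 'a) \<Rightarrow> ('a \<Rightarrow> 'a \<Rightarrow> 'a)
   \<Rightarrow> ('b \<Rightarrow> 'b) \<Rightarrow> ('b \<Rightarrow> 'b) \<Rightarrow> ('b \<Rightarrow> 'b \<Rightarrow> 'b) \<Rightarrow> ('a \<Rightarrow> 'b) \<Rightarrow> bool" where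
  "groupoid_hom r d m r' d' m' p \<longleftrightarrow>
     (\<forall>x y. d x = r y \<longrightarrow> d' (p x) = r' (p y) \<and> p (m x y) = m' (p x) (p y))"

definition haar_groupoid_hom ::
  "('a::{t2_space,second_countable_topology} \<Rightarrow> 'a) \<Rightarrow> ('a \<Rightarrow> 'a) \<Rightarrow> ('a \<Rightarrow> 'a \<Rightarrow> 'a) \<Rightarrow> ('a \<Rightarrow> 'a measure) \<Rightarrow> 'a measure
   \<Rightarrow> ('b::{t2_space,second_countable_topology} \<Rightarrow> 'b) \<Rightarrow> ('b \<Rightarrow> 'b) \<Rightarrow> ('b \<Rightarrow> 'b \<Rightarrow> 'b) \<Rightarrow> ('b \<Rightarrow> 'b measure) \<Rightarrow> 'b measure
   \<Rightarrow> ('a \<Rightarrow> 'b) \<Rightarrow> bool" where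
  "haar_groupoid_hom r d m lam mu0 r' d' m' eta nu0 p \<longleftrightarrow>
     continuous_on UNIV p \<and> groupoid_hom r d m r' d' m' p \<and>
     (\<forall>E\<in>sets borel. induced_measure lam mu0 (p -` E) = 0 \<longleftrightarrow> induced_measure eta nu0 E = 0)"

end

theory Submission
  imports Defs
begin

text \<open>For a Haar groupoid, a Borel set A of units is null for the measure on the unit space
  iff r^-1(A) is null for the induced measure: one direction holds because each
  \<lambda>^u lives on r^-1(u); for the other, the continuous functions u \<mapsto> \<lambda>^u(\<phi>) of bump
  functions \<phi> are positive on relatively open sets of units covering the unit space
  (positivity of the Haar system), and by the Lindelof property countably many of them suffice.
  Since a homomorphism commutes with the range maps, p^-1(r'^-1(E)) is
  r^-1(p^-1(E) \<inter> G^(0)), and the theorem follows from p_*\<mu> \<sim> \<nu>.\<close>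

lemma gunits_eq_fixed_points:
  assumes "groupoid r d m i"
  shows "gunits r = {x. r x = x}"
proof -
  have "\<And>x. r (r x) = r x" using assms unfolding groupoid_def by simp
  then show ?thesis unfolding gunits_def by (auto, metis rangeI)
qed

lemma closed_gunits:
  fixes r :: "'a::t2_space \<Rightarrow> 'a"
  assumes "groupoid r d m i" and "continuous_on UNIV r"
  shows "closed (gunits r)"
  unfolding gunits_eq_fixed_points[OF assms(1)]
  using closed_Collect_eq[OF assms(2) continuous_on_id] by simp

lemma groupoid_idempotent_eq_source:
  assumes grp: "groupoid r d m i" and "d y = r y" and "m y y = y"
  shows "y = d y"
proof -
  have assoc: "\<And>x y z. d x = r y \<Longrightarrow> d y = r z \<Longrightarrow> m (m x y) z = m x (m y z)"
    and left_unit: "\<And>x. m (r x) x = x"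
    and inv: "\<And>x. r (i x) = d x" "\<And>x. d (i x) = r x" "\<And>x. m (i x) x = d x"
    using grp unfolding groupoid_def by blast+
  have "d y = m (i y) (m y y)" using inv \<open>m y y = y\<close> by simp
  also have "\<dots> = m (d y) y" using assoc[of "i y" y y] inv \<open>d y = r y\<close> by simp
  also have "\<dots> = y" using \<open>d y = r y\<close> left_unit by simp
  finally show ?thesis by simp
qed

text \<open>p (r x) is an idempotent of H, hence a unit.\<close>

lemma groupoid_hom_range:
  assumes "groupoid r d m i" and grp': "groupoid r' d' m' i'"
    and hom: "groupoid_hom r d m r' d' m' p"
  shows "r' (p x) = p (r x)"
proof -
  have r: "r (r x) = r x" "d (r x) = r x" "\<And>y. m (r y) y = y"
    using assms(1) unfolding groupoid_def by simp_all
  have comp: "\<And>x y. d x = r y \<Longrightarrow> d' (p x) = r' (p y) \<and> p (m x y) = m' (p x) (p y)"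
    using hom unfolding groupoid_hom_def by blast
  have "p (r x) = m' (p (r x)) (p (r x))" "d' (p (r x)) = r' (p (r x))"
    using comp[of "r x" "r x"] r(3)[of "r x"] r(1,2) by simp_all
  then have "p (r x) = d' (p (r x))"
    using groupoid_idempotent_eq_source[OF grp'] by simp
  also have "\<dots> = r' (p x)" using comp[of "r x" x] r(2) by simp
  finally show ?thesis by simp
qed

lemma Cc_nonneg_bump:
  fixes u :: "'a::{t2_space,second_countable_topology}"
  assumes lc: "locally_compact_space (euclidean :: 'a topology)"
  obtains f :: "'a \<Rightarrow> real" where "f \<in> Cc_nonneg" "\<forall>x. f x \<le> 1" "f u = 1"
proof -
  have H: "Hausdorff_space (euclidean :: 'a topology)"
    unfolding Hausdorff_space_def by (simp add: separation_t2 disjnt_def)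
  have cr: "completely_regular_space (euclidean :: 'a topology)"
    using locally_compact_regular_imp_completely_regular_space[OF lc] H by blast
  obtain U where U: "open U" "compact (closure U)" "u \<in> U"
    using lc H unfolding locally_compact_space_compact_closure_of[OF disjI1[OF H]] by auto
  obtain f where f: "continuous_map euclidean (top_of_set {0..1::real}) f"
      "f ` (UNIV - U) \<subseteq> {0}" "f ` {u} \<subseteq> {1}"
    using Urysohn_completely_regular_compact_closed[of 0 1 euclidean "{u}" "UNIV - U"] cr U
    by (auto simp: disjnt_def closed_open)
  have "\<forall>x. f x \<in> {0..1}" and "continuous_on UNIV f"
    using f(1) by (auto simp: continuous_map_in_subtopology)
  moreover have "closure {x. f x \<noteq> 0} \<subseteq> closure U"
    using f(2) by (intro closure_mono) auto
  then have "compact (closure {x. f x \<noteq> 0})"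
    using compact_Int_closed[OF U(2) closed_closure, of "{x. f x \<noteq> 0}"]
    by (simp add: inf.absorb2)
  ultimately show ?thesis using that f(3) by (auto simp: Cc_nonneg_def)
qed

lemma continuous_left_haar_systemD:
  assumes "continuous_left_haar_system r d m lam" and "u \<in> gunits r"
  shows "sets (lam u) = sets borel" and "emeasure (lam u) (UNIV - r -` {u}) = 0"
    and "\<And>f. f \<in> Cc_nonneg \<Longrightarrow> (\<integral>\<^sup>+ x. ennreal (f x) \<partial>lam u) < \<infinity>"
    and "\<And>A. open A \<Longrightarrow> A \<inter> r -` {u} \<noteq> {} \<Longrightarrow> 0 < emeasure (lam u) A"
  using assms unfolding continuous_left_haar_system_def by simp_all

lemma continuous_left_haar_system_continuous_on:
  assumes "continuous_left_haar_system r d m lam" and "f \<in> Cc_nonneg"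
  shows "continuous_on (gunits r) (\<lambda>u. enn2real (\<integral>\<^sup>+ x. ennreal (f x) \<partial>lam u))"
  using assms unfolding continuous_left_haar_system_def by simp

lemma haar_system_emeasure_range_vimage:
  fixes r :: "'a::{t2_space,second_countable_topology} \<Rightarrow> 'a"
  assumes haar: "continuous_left_haar_system r d m lam"
    and r: "r \<in> borel_measurable borel" and u: "u \<in> gunits r" and A: "A \<in> sets borel"
  shows "emeasure (lam u) (r -` A) = indicator A u * emeasure (lam u) UNIV"
proof -
  have sets: "sets (lam u) = sets borel" and "emeasure (lam u) (UNIV - r -` {u}) = 0"
    using continuous_left_haar_systemD[OF haar u] by simp_all
  moreover have "UNIV - r -` {u} \<in> sets borel" "r -` A \<in> sets borel" "r -` {u} \<in> sets borel"
    using measurable_sets[OF r] A by auto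
  ultimately have null: "UNIV - r -` {u} \<in> null_sets (lam u)"
    by (auto simp: null_sets_def)
  have on_fibre: "emeasure (lam u) B = emeasure (lam u) (B \<inter> r -` {u})" if "B \<in> sets borel" for B
  proof -
    have "B \<inter> r -` {u} = B - (UNIV - r -` {u})" by blast
    then show ?thesis using emeasure_Diff_null_set[OF null, of B] sets that by simp
  qed
  have "emeasure (lam u) (r -` A) = emeasure (lam u) (r -` (A \<inter> {u}))"
    using on_fibre \<open>r -` A \<in> sets borel\<close> by (simp add: vimage_Int)
  also have "\<dots> = indicator A u * emeasure (lam u) (r -` {u})"
    by (cases "u \<in> A") auto
  also have "emeasure (lam u) (r -` {u}) = emeasure (lam u) UNIV"
    using on_fibre[of UNIV] by simp
  finally show ?thesis .
qed

lemma haar_system_nn_integral_pos: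
  fixes r :: "'a::{t2_space,second_countable_topology} \<Rightarrow> 'a"
  assumes haar: "continuous_left_haar_system r d m lam" and u: "u \<in> gunits r" "r u = u"
    and f: "continuous_on UNIV f" "\<forall>x. 0 \<le> f x" "0 < f u"
  shows "0 < (\<integral>\<^sup>+ x. ennreal (f x) \<partial>lam u)"
proof -
  define P where "P = {x. f u / 2 < f x}"
  have "open P" unfolding P_def using open_Collect_less[OF continuous_on_const f(1)] .
  moreover have "u \<in> P \<inter> r -` {u}" using f(3) u(2) by (simp add: P_def)
  ultimately have "0 < emeasure (lam u) P"
    using continuous_left_haar_systemD(4)[OF haar u(1)] by blast
  then have "0 < ennreal (f u / 2) * emeasure (lam u) P"
    using f(3) by (simp add: ennreal_zero_less_mult_iff)
  also have "\<dots> = (\<integral>\<^sup>+ x. ennreal (f u / 2) * indicator P x \<partial>lam u)"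
    using \<open>open P\<close> continuous_left_haar_systemD(1)[OF haar u(1)]
    by (intro nn_integral_cmult_indicator[symmetric]) auto
  also have "\<dots> \<le> (\<integral>\<^sup>+ x. ennreal (f x) \<partial>lam u)"
    by (intro nn_integral_mono) (auto simp: P_def indicator_def intro: ennreal_leI)
  finally show ?thesis .
qed

lemma haar_system_countable_bump_cover:
  fixes r :: "'a::{t2_space,second_countable_topology} \<Rightarrow> 'a"
  assumes lc: "locally_compact_space (euclidean :: 'a topology)"
    and haar: "continuous_left_haar_system r d m lam" and units: "\<forall>u\<in>gunits r. r u = u"
  obtains \<Phi> where "countable \<Phi>" "\<Phi> \<subseteq> {\<phi> \<in> Cc_nonneg. \<forall>x. \<phi> x \<le> 1}"
    "\<forall>u\<in>gunits r. \<exists>\<phi>\<in>\<Phi>. 0 < (\<integral>\<^sup>+ x. ennreal (\<phi> x) \<partial>lam u)"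
proof -
  define I where "I \<phi> u = enn2real (\<integral>\<^sup>+ x. ennreal (\<phi> x) \<partial>lam u)" for \<phi> :: "'a \<Rightarrow> real" and u
  define S where "S \<phi> = {u \<in> gunits r. 0 < I \<phi> u}" for \<phi>
  define B where "B = {\<phi> \<in> (Cc_nonneg :: ('a \<Rightarrow> real) set). \<forall>x. \<phi> x \<le> 1}"
  have cont: "continuous_on (gunits r) (I \<phi>)" if "\<phi> \<in> Cc_nonneg" for \<phi>
    using continuous_left_haar_system_continuous_on[OF haar that] unfolding I_def .
  have S_open: "openin (top_of_set (gunits r)) (S \<phi>)" if "\<phi> \<in> B" for \<phi>
  proof -
    have "S \<phi> = gunits r \<inter> I \<phi> -` {0<..}" by (auto simp: S_def)
    moreover have "\<phi> \<in> Cc_nonneg" using that by (simp add: B_def)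
    ultimately show ?thesis
      using continuous_openin_preimage_gen[OF cont open_greaterThan] by simp
  qed
  have cover: "gunits r \<subseteq> \<Union>(S ` B)"
  proof
    fix u assume u: "u \<in> gunits r"
    obtain f where f: "f \<in> Cc_nonneg" "\<forall>x. f x \<le> 1" "f u = 1" using Cc_nonneg_bump[OF lc] .
    then have "0 < (\<integral>\<^sup>+ x. ennreal (f x) \<partial>lam u)"
      using u units by (intro haar_system_nn_integral_pos[OF haar]) (auto simp: Cc_nonneg_def)
    then have "u \<in> S f" using continuous_left_haar_systemD(3)[OF haar u f(1)] u by (simp add: S_def I_def enn2real_positive_iff)
    then show "u \<in> \<Union>(S ` B)" using f by (auto simp: B_def)
  qed
  obtain F where F: "F \<subseteq> S ` B" "countable F" "\<Union>F = \<Union>(S ` B)"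
    by (rule Lindelof_openin[of "S ` B" "gunits r"]) (use S_open in blast)+
  then obtain \<Phi> where \<Phi>: "countable \<Phi>" "\<Phi> \<subseteq> B" "F = S ` \<Phi>"
    using countable_subset_image[of F S B] by blast
  have "\<forall>u\<in>gunits r. \<exists>\<phi>\<in>\<Phi>. 0 < (\<integral>\<^sup>+ x. ennreal (\<phi> x) \<partial>lam u)"
  proof
    fix u assume "u \<in> gunits r"
    then obtain \<phi> where "\<phi> \<in> \<Phi>" "u \<in> S \<phi>"
      using cover F(3) \<Phi>(3) by blast
    then show "\<exists>\<phi>\<in>\<Phi>. 0 < (\<integral>\<^sup>+ x. ennreal (\<phi> x) \<partial>lam u)"
      by (auto simp: S_def I_def enn2real_positive_iff)
  qed
  moreover have "\<Phi> \<subseteq> {\<phi> \<in> Cc_nonneg. \<forall>x. \<phi> x \<le> 1}" using \<Phi>(2) by (simp add: B_def)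
  ultimately show ?thesis using that \<Phi>(1) by blast
qed

lemma haar_system_nn_integral_measurable:
  fixes r :: "'a::{t2_space,second_countable_topology} \<Rightarrow> 'a"
  assumes haar: "continuous_left_haar_system r d m lam"
    and G0: "gunits r \<in> sets borel" and \<phi>: "\<phi> \<in> Cc_nonneg"
  shows "(\<lambda>u. indicator (gunits r) u * (\<integral>\<^sup>+ x. ennreal (\<phi> x) \<partial>lam u)) \<in> borel_measurable borel"
proof -
  have finite: "\<forall>u\<in>gunits r. (\<integral>\<^sup>+ x. ennreal (\<phi> x) \<partial>lam u) < \<infinity>"
    and cont: "continuous_on (gunits r) (\<lambda>u. enn2real (\<integral>\<^sup>+ x. ennreal (\<phi> x) \<partial>lam u))"
    using continuous_left_haar_systemD(3)[OF haar _ \<phi>]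
      continuous_left_haar_system_continuous_on[OF haar \<phi>] by simp_all
  have "(\<lambda>u. indicator (gunits r) u * (\<integral>\<^sup>+ x. ennreal (\<phi> x) \<partial>lam u))
      = (\<lambda>u. ennreal (indicator (gunits r) u *\<^sub>R enn2real (\<integral>\<^sup>+ x. ennreal (\<phi> x) \<partial>lam u)))"
    using finite by (intro ext) (auto simp: indicator_def)
  also have "\<dots> \<in> borel_measurable borel"
    by (rule measurable_compose[OF borel_measurable_continuous_on_indicator[OF G0 cont] measurable_ennreal])
  finally show ?thesis .
qed

lemma haar_groupoid_unit_null_iff:
  fixes r :: "'a::{t2_space,second_countable_topology} \<Rightarrow> 'a"
  assumes hg: "haar_groupoid r d m i lam mu0" and A: "A \<in> sets borel" "A \<subseteq> gunits r"
  shows "emeasure mu0 A = 0 \<longleftrightarrow> induced_measure lam mu0 (r -` A) = 0"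
proof -
  have grp: "groupoid r d m i" and r_cont: "continuous_on UNIV r"
    and lc: "locally_compact_space (euclidean :: 'a topology)"
    and haar: "continuous_left_haar_system r d m lam" and sets_mu0: "sets mu0 = sets borel"
    and "emeasure mu0 (UNIV - gunits r) = 0"
    using hg unfolding haar_groupoid_def lc_topological_groupoid_def radon_on_def by simp_all
  have G0: "gunits r \<in> sets borel" using closed_gunits[OF grp r_cont] by (simp add: borel_closed)
  have r: "r \<in> borel_measurable borel" using borel_measurable_continuous_onI[OF r_cont] .
  have space_mu0: "space mu0 = UNIV" using sets_eq_imp_space_eq[OF sets_mu0] by simp
  have "UNIV - gunits r \<in> null_sets mu0"
    using \<open>emeasure mu0 (UNIV - gunits r) = 0\<close> G0 sets_mu0 by (auto simp: null_sets_def)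
  then have AE_G0: "AE u in mu0. u \<in> gunits r" using AE_not_in by fastforce
  have fibre: "AE u in mu0. emeasure (lam u) (r -` A) = indicator A u * emeasure (lam u) UNIV"
    using AE_G0 by eventually_elim (rule haar_system_emeasure_range_vimage[OF haar r _ A(1)])
  show ?thesis
  proof
    assume "emeasure mu0 A = 0"
    then have "AE u in mu0. u \<notin> A"
      using A sets_mu0 by (intro AE_not_in) (auto simp: null_sets_def)
    with fibre have "AE u in mu0. emeasure (lam u) (r -` A) = 0" by eventually_elim simp
    then show "induced_measure lam mu0 (r -` A) = 0"
      unfolding induced_measure_def by (simp add: nn_integral_cong_AE)
  next
    assume null: "induced_measure lam mu0 (r -` A) = 0"
    have units: "\<forall>u\<in>gunits r. r u = u" using gunits_eq_fixed_points[OF grp] by simp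
    obtain \<Phi> where \<Phi>: "countable \<Phi>" "\<Phi> \<subseteq> {\<phi> \<in> Cc_nonneg. \<forall>x. \<phi> x \<le> 1}"
      "\<forall>u\<in>gunits r. \<exists>\<phi>\<in>\<Phi>. 0 < (\<integral>\<^sup>+ x. ennreal (\<phi> x) \<partial>lam u)"
      using haar_system_countable_bump_cover[OF lc haar units] by blast
    define h where "h \<phi> u = indicator A u * (\<integral>\<^sup>+ x. ennreal (\<phi> x) \<partial>lam u)" for \<phi> u
    have "AE u in mu0. h \<phi> u = 0" if \<phi>: "\<phi> \<in> \<Phi>" for \<phi>
    proof -
      have "h \<phi> = (\<lambda>u. indicator A u * (indicator (gunits r) u * (\<integral>\<^sup>+ x. ennreal (\<phi> x) \<partial>lam u)))"
        using A(2) by (intro ext) (auto simp: h_def indicator_def)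
      then have "h \<phi> \<in> borel_measurable mu0"
        using haar_system_nn_integral_measurable[OF haar G0, of \<phi>] \<phi> \<Phi>(2) A(1)
        by (simp add: measurable_cong_sets[OF sets_mu0 refl] subset_iff)
      moreover have "AE u in mu0. h \<phi> u \<le> emeasure (lam u) (r -` A)"
        using AE_G0 fibre
      proof eventually_elim
        case (elim u)
        have "sets (lam u) = sets borel"
          using continuous_left_haar_systemD(1)[OF haar elim(1)] .
        then have "space (lam u) = UNIV" using sets_eq_imp_space_eq by fastforce
        have "(\<integral>\<^sup>+ x. ennreal (\<phi> x) \<partial>lam u) \<le> (\<integral>\<^sup>+ x. 1 \<partial>lam u)"
          using \<phi> \<Phi>(2) by (intro nn_integral_mono) (auto simp flip: ennreal_1 intro: ennreal_leI)
        also have "\<dots> = emeasure (lam u) UNIV" using \<open>space (lam u) = UNIV\<close> by simp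
        finally show ?case using elim(2) by (auto simp: h_def indicator_def)
      qed
      then have "(\<integral>\<^sup>+ u. h \<phi> u \<partial>mu0) = 0"
        using null nn_integral_mono_AE[of "h \<phi>"] unfolding induced_measure_def
        by (metis le_zero_eq)
      ultimately show ?thesis using nn_integral_0_iff_AE by blast
    qed
    then have "AE u in mu0. \<forall>\<phi>\<in>\<Phi>. h \<phi> u = 0" by (simp add: AE_ball_countable \<Phi>(1))
    then have "AE u in mu0. u \<notin> A"
      by eventually_elim (use A(2) \<Phi>(3) in \<open>force simp: h_def\<close>)
    then show "emeasure mu0 A = 0"
      using AE_iff_measurable[of A mu0 "\<lambda>u. u \<notin> A"] A(1) sets_mu0 space_mu0 by auto
  qed
qed

theorem proposition2p11:
  fixes r d :: "'a::{t2_space,second_countable_topology} \<Rightarrow> 'a" and m :: "'a \<Rightarrow> 'a \<Rightarrow> 'a"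
    and i :: "'a \<Rightarrow> 'a" and lam :: "'a \<Rightarrow> 'a measure" and mu0 :: "'a measure"
    and r' d' :: "'b::{t2_space,second_countable_topology} \<Rightarrow> 'b" and m' :: "'b \<Rightarrow> 'b \<Rightarrow> 'b"
    and i' :: "'b \<Rightarrow> 'b" and eta :: "'b \<Rightarrow> 'b measure" and nu0 :: "'b measure"
    and p :: "'a \<Rightarrow> 'b"
  assumes "haar_groupoid r d m i lam mu0"
    and "haar_groupoid r' d' m' i' eta nu0"
    and "haar_groupoid_hom r d m lam mu0 r' d' m' eta nu0 p"
  shows "\<forall>E\<in>sets borel. E \<subseteq> gunits r' \<longrightarrow>
           (emeasure mu0 (p -` E \<inter> gunits r) = 0 \<longleftrightarrow> emeasure nu0 E = 0)"
proof (intro ballI impI)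
  fix E :: "'b set" assume E: "E \<in> sets borel" "E \<subseteq> gunits r'"
  have grp: "groupoid r d m i" "continuous_on UNIV r"
    and grp': "groupoid r' d' m' i'" "continuous_on UNIV r'"
    using assms(1,2) unfolding haar_groupoid_def lc_topological_groupoid_def by simp_all
  have p: "continuous_on UNIV p" and hom: "groupoid_hom r d m r' d' m' p"
    and push: "\<And>E. E \<in> sets borel \<Longrightarrow>
      induced_measure lam mu0 (p -` E) = 0 \<longleftrightarrow> induced_measure eta nu0 E = 0"
    using assms(3) unfolding haar_groupoid_hom_def by simp_all
  define A where "A = p -` E \<inter> gunits r"
  have A: "A \<in> sets borel" "A \<subseteq> gunits r"
    using measurable_sets[OF borel_measurable_continuous_onI[OF p] E(1)]
      borel_closed[OF closed_gunits[OF grp]] by (auto simp: A_def)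
  have "r' -` E \<in> sets borel"
    using measurable_sets[OF borel_measurable_continuous_onI[OF grp'(2)] E(1)] by simp
  moreover have "p -` (r' -` E) = r -` A"
    using groupoid_hom_range[OF grp(1) grp'(1) hom] by (auto simp: A_def gunits_def)
  ultimately have "induced_measure lam mu0 (r -` A) = 0 \<longleftrightarrow> induced_measure eta nu0 (r' -` E) = 0"
    using push by metis
  then show "emeasure mu0 A = 0 \<longleftrightarrow> emeasure nu0 E = 0"
    using haar_groupoid_unit_null_iff[OF assms(1) A] haar_groupoid_unit_null_iff[OF assms(2) E]
    by simp
qed

end
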